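(* Let $G$ be a finite group and $p$ a prime. Then \[ \chi(\mathcal F^*_G)=|G|^{-1}\sum_{x\in G}\chi(\mathcal S^*_{C_G(x)}). \]
   Context: $\mathcal F^*_G$ is the category whose objects are the nonidentity $p$-subgroups of $G$, with $\mathcal F^*_G(H,K)=C_G(H)\backslash N_G(H,K)$, $N_G(H,K)=\{g\in G:g^{-1}Hg\le K\}$, composition induced by multiplication. For a finite group $X$, $\mathcal S^*_X$ is the poset of nonidentity $p$-subgroups of $X$ under inclusion. $\chi$ is Leinster's Euler characteristic: for a finite category $\mathcal C$, a weighting is $k^\bullet$ with $\sum_b|\mathcal C(a,b)|k^b=1$ for all $a$, a coweighting is $k_\bullet$ with $\sum_ak_a|\mathcal C(a,b)|=1$ for all $b$, and if both exist $\chi(\mathcal C)=\sum_bk^b=\sum_ak_a$ (for a finite poset, the sum of all values of the Möbius function; $0$ if empty). *)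

theory Defs
  imports "HOL-Algebra.Algebra"
begin

(* Leinster Euler characteristic of a finite category, which only depends on the
   finite object set Ob and the hom-set cardinalities zeta a b = |C(a,b)|. *)
definition is_weighting :: "'o set \<Rightarrow> ('o \<Rightarrow> 'o \<Rightarrow> nat) \<Rightarrow> ('o \<Rightarrow> rat) \<Rightarrow> bool" where
  "is_weighting Ob zeta k \<longleftrightarrow> (\<forall>a\<in>Ob. (\<Sum>b\<in>Ob. of_nat (zeta a b) * k b) = 1)"

definition is_coweighting :: "'o set \<Rightarrow> ('o \<Rightarrow> 'o \<Rightarrow> nat) \<Rightarrow> ('o \<Rightarrow> rat) \<Rightarrow> bool" where
  "is_coweighting Ob zeta k \<longleftrightarrow> (\<forall>b\<in>Ob. (\<Sum>a\<in>Ob. k a * of_nat (zeta a b)) = 1)"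

definition has_euler_char :: "'o set \<Rightarrow> ('o \<Rightarrow> 'o \<Rightarrow> nat) \<Rightarrow> bool" where
  "has_euler_char Ob zeta \<longleftrightarrow> (\<exists>k. is_weighting Ob zeta k) \<and> (\<exists>k. is_coweighting Ob zeta k)"

definition euler_char :: "'o set \<Rightarrow> ('o \<Rightarrow> 'o \<Rightarrow> nat) \<Rightarrow> rat" where
  "euler_char Ob zeta = (\<Sum>b\<in>Ob. (SOME k. is_weighting Ob zeta k) b)"

definition nonid_p_subgroups :: "('a, 'b) monoid_scheme \<Rightarrow> nat \<Rightarrow> 'a set set" where
  "nonid_p_subgroups G p = {H. subgroup H G \<and> (\<exists>n. card H = p ^ n) \<and> H \<noteq> {\<one>\<^bsub>G\<^esub>}}"

definition centralizer_set :: "('a, 'b) monoid_scheme \<Rightarrow> 'a set \<Rightarrow> 'a set" where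
  "centralizer_set G H = {g \<in> carrier G. \<forall>h\<in>H. g \<otimes>\<^bsub>G\<^esub> h = h \<otimes>\<^bsub>G\<^esub> g}"

definition transporter :: "('a, 'b) monoid_scheme \<Rightarrow> 'a set \<Rightarrow> 'a set \<Rightarrow> 'a set" where
  "transporter G H K = {g \<in> carrier G. (\<lambda>h. inv\<^bsub>G\<^esub> g \<otimes>\<^bsub>G\<^esub> h \<otimes>\<^bsub>G\<^esub> g) ` H \<subseteq> K}"

(* |F*_G(H,K)| = |C_G(H) \ N_G(H,K)|: number of right cosets C_G(H) g, g in N_G(H,K) *)
definition fusion_hom_card :: "('a, 'b) monoid_scheme \<Rightarrow> 'a set \<Rightarrow> 'a set \<Rightarrow> nat" where
  "fusion_hom_card G H K = card ((\<lambda>g. r_coset G (centralizer_set G H) g) ` transporter G H K)"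

definition fusion_chi_defined :: "('a, 'b) monoid_scheme \<Rightarrow> nat \<Rightarrow> bool" where
  "fusion_chi_defined G p = has_euler_char (nonid_p_subgroups G p) (fusion_hom_card G)"

definition fusion_chi :: "('a, 'b) monoid_scheme \<Rightarrow> nat \<Rightarrow> rat" where
  "fusion_chi G p = euler_char (nonid_p_subgroups G p) (fusion_hom_card G)"

definition poset_chi :: "('a, 'b) monoid_scheme \<Rightarrow> nat \<Rightarrow> rat" where
  "poset_chi G p = euler_char (nonid_p_subgroups G p) (\<lambda>H K. of_bool (H \<subseteq> K))"

end

theory Submission
  imports Defs
begin

(* A morphism H -> K of F*_G is a coset of C_G(H) in N_G(H,K), so
   |F*_G(H,K)| = #{g. g^-1 H g <= K} / |C_G(H)|.  Conjugation permutes the nonidentity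
   p-subgroups and preserves the orders of their centralisers.  Hence a solution w of
   sum_K [H <= K] w(K) = |C_G(H)|/|G| on the poset S*_G is a weighting of F*_G, and for a
   coweighting v of S*_G the function H |-> |C_G(H)| v(H)/|G| is a coweighting of F*_G; both
   exist because the zeta matrix of a finite poset is unitriangular.  Therefore
     chi(F*_G) = |G|^-1 sum_H |C_G(H)| v(H) = |G|^-1 sum_x sum_{H <= C_G(x)} v(H),
   and the inner sum is chi(S*_{C_G(x)}), since S*_{C_G(x)} is a down-closed subposet of S*_G
   on which v restricts to a coweighting. *)

lemma weighting_sum_eq_coweighting_sum:
  assumes "finite Ob" "is_weighting Ob zeta k" "is_coweighting Ob zeta k'"
  shows "sum k Ob = sum k' Ob"
proof -
  have "sum k Ob = (\<Sum>b\<in>Ob. (\<Sum>a\<in>Ob. k' a * of_nat (zeta a b)) * k b)"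
    using assms(3) unfolding is_coweighting_def by simp
  also have "\<dots> = (\<Sum>a\<in>Ob. k' a * (\<Sum>b\<in>Ob. of_nat (zeta a b) * k b))"
    by (simp add: sum_distrib_left sum_distrib_right mult.assoc) (rule sum.swap)
  also have "\<dots> = sum k' Ob"
    using assms(2) unfolding is_weighting_def by simp
  finally show ?thesis .
qed

lemma euler_char_eq_coweighting_sum:
  assumes "finite Ob" "\<exists>k. is_weighting Ob zeta k" "is_coweighting Ob zeta k'"
  shows "euler_char Ob zeta = sum k' Ob"
  unfolding euler_char_def
  using weighting_sum_eq_coweighting_sum[OF assms(1) someI_ex[OF assms(2)] assms(3)] .

lemma unitriangular_system_solvable:
  fixes R :: "'a \<Rightarrow> 'a \<Rightarrow> bool" and t :: "'a \<Rightarrow> 'b::ring_1"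
  assumes "finite Ob"
    and R_refl: "\<And>a. a \<in> Ob \<Longrightarrow> R a a"
    and minimal: "\<And>A. A \<subseteq> Ob \<Longrightarrow> A \<noteq> {} \<Longrightarrow> \<exists>m\<in>A. \<forall>a\<in>A. R a m \<longrightarrow> a = m"
  shows "\<exists>k. \<forall>a\<in>Ob. (\<Sum>b\<in>Ob. of_bool (R a b) * k b) = t a"
  using \<open>finite Ob\<close>
proof (induction rule: finite_remove_induct)
  case empty
  then show ?case by simp
next
  case (remove A)
  \<comment> \<open>Only row \<open>m\<close> of the system involves \<open>k m\<close>, with coefficient 1.\<close>
  obtain m where m: "m \<in> A" and m_min: "\<And>a. a \<in> A \<Longrightarrow> R a m \<Longrightarrow> a = m"
    using minimal[OF remove(3,2)] by blast
  obtain k where k: "\<And>a. a \<in> A - {m} \<Longrightarrow> (\<Sum>b\<in>A - {m}. of_bool (R a b) * k b) = t a"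
    using remove.IH[OF m] by blast
  define k' where "k' = k(m := t m - (\<Sum>b\<in>A - {m}. of_bool (R m b) * k b))"
  have row_split: "(\<Sum>b\<in>A. of_bool (R a b) * k' b)
      = of_bool (R a m) * k' m + (\<Sum>b\<in>A - {m}. of_bool (R a b) * k b)" for a
  proof -
    have "(\<Sum>b\<in>A - {m}. of_bool (R a b) * k' b) = (\<Sum>b\<in>A - {m}. of_bool (R a b) * k b)"
      by (rule sum.cong[OF refl]) (simp add: k'_def)
    with sum.remove[OF \<open>finite A\<close> m, of "\<lambda>b. of_bool (R a b) * k' b"] show ?thesis
      by (simp only:)
  qed
  have "(\<Sum>b\<in>A. of_bool (R a b) * k' b) = t a" if "a \<in> A" for a
  proof (cases "a = m")
    case True
    have "R m m" using R_refl m remove(3) by blast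
    then have "(\<Sum>b\<in>A. of_bool (R m b) * k' b) = k' m + (\<Sum>b\<in>A - {m}. of_bool (R m b) * k b)"
      using row_split[of m] by simp
    also have "\<dots> = t m" by (simp add: k'_def)
    finally show ?thesis using True by simp
  next
    case False
    then have "\<not> R a m" using m_min that by blast
    then have "(\<Sum>b\<in>A. of_bool (R a b) * k' b) = (\<Sum>b\<in>A - {m}. of_bool (R a b) * k b)"
      using row_split[of a] by simp
    also have "\<dots> = t a" using k False that by blast
    finally show ?thesis .
  qed
  then show ?case by blast
qed

lemma poset_zeta_solvable:
  fixes Ob :: "'a::order set" and t :: "'a \<Rightarrow> 'b::ring_1"
  assumes "finite Ob"
  shows "\<exists>k. \<forall>a\<in>Ob. (\<Sum>b\<in>Ob. of_bool (a \<le> b) * k b) = t a"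
proof (rule unitriangular_system_solvable[OF assms])
  fix A assume "A \<subseteq> Ob" "A \<noteq> {}"
  then obtain m where "m \<in> A" "\<forall>a\<in>A. a \<le> m \<longrightarrow> m = a"
    using finite_has_minimal[OF finite_subset[OF _ assms]] by meson
  then show "\<exists>m\<in>A. \<forall>a\<in>A. a \<le> m \<longrightarrow> a = m" by auto
qed simp

lemma poset_has_weighting:
  fixes Ob :: "'a::order set"
  assumes "finite Ob"
  shows "\<exists>k. is_weighting Ob (\<lambda>a b. of_bool (a \<le> b)) k"
  using poset_zeta_solvable[OF assms, of "\<lambda>_. 1"] by (simp add: is_weighting_def)

lemma poset_has_coweighting:
  fixes Ob :: "'a::order set"
  assumes "finite Ob"
  shows "\<exists>k. is_coweighting Ob (\<lambda>a b. of_bool (a \<le> b)) k"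
proof -
  obtain k :: "'a \<Rightarrow> rat" where "\<forall>b\<in>Ob. (\<Sum>a\<in>Ob. of_bool (b \<ge> a) * k a) = 1"
  proof (rule unitriangular_system_solvable[OF assms, of "\<lambda>b a. b \<ge> a", THEN exE])
    fix A assume "A \<subseteq> Ob" "A \<noteq> {}"
    then obtain m where "m \<in> A" "\<forall>a\<in>A. m \<le> a \<longrightarrow> m = a"
      using finite_has_maximal[OF finite_subset[OF _ assms]] by meson
    then show "\<exists>m\<in>A. \<forall>a\<in>A. a \<ge> m \<longrightarrow> a = m" by auto
  qed auto
  then show ?thesis
    by (auto simp: is_coweighting_def mult.commute)
qed

lemma coweighting_restrict_down_closed:
  fixes Ob :: "'a::order set"
  assumes "finite Ob" "is_coweighting Ob (\<lambda>a b. of_bool (a \<le> b)) k" "D \<subseteq> Ob"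
    and down_closed: "\<And>a b. a \<in> Ob \<Longrightarrow> b \<in> D \<Longrightarrow> a \<le> b \<Longrightarrow> a \<in> D"
  shows "is_coweighting D (\<lambda>a b. of_bool (a \<le> b)) k"
  unfolding is_coweighting_def
proof
  fix b assume b: "b \<in> D"
  have "(\<Sum>a\<in>D. k a * of_bool (a \<le> b)) = (\<Sum>a\<in>Ob. k a * of_bool (a \<le> b))"
  proof (rule sum.mono_neutral_left[OF assms(1,3)])
    show "\<forall>a\<in>Ob - D. k a * of_bool (a \<le> b) = 0"
      using down_closed[OF _ b] by auto
  qed
  also have "\<dots> = 1"
    using assms(2,3) b by (auto simp: is_coweighting_def)
  finally show "(\<Sum>a\<in>D. k a * of_nat (of_bool (a \<le> b))) = 1" by simp
qed

lemma poset_euler_char_down_closed: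
  fixes Ob :: "'a::order set"
  assumes "finite Ob" "is_coweighting Ob (\<lambda>a b. of_bool (a \<le> b)) k" "D \<subseteq> Ob"
    and "\<And>a b. a \<in> Ob \<Longrightarrow> b \<in> D \<Longrightarrow> a \<le> b \<Longrightarrow> a \<in> D"
  shows "euler_char D (\<lambda>a b. of_bool (a \<le> b)) = sum k D"
proof (rule euler_char_eq_coweighting_sum)
  show "finite D" using finite_subset[OF assms(3,1)] .
  then show "\<exists>k. is_weighting D (\<lambda>a b. of_bool (a \<le> b)) k" by (rule poset_has_weighting)
  show "is_coweighting D (\<lambda>a b. of_bool (a \<le> b)) k"
    using assms by (rule coweighting_restrict_down_closed)
qed

(* conj_set G g H is H^g = g^-1 H g, matching transporter; the library's conjugation action
   uses g H g^-1 instead. *)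
definition conj_set :: "('a, 'b) monoid_scheme \<Rightarrow> 'a \<Rightarrow> 'a set \<Rightarrow> 'a set" where
  "conj_set G g H = (\<lambda>h. inv\<^bsub>G\<^esub> g \<otimes>\<^bsub>G\<^esub> h \<otimes>\<^bsub>G\<^esub> g) ` H"

lemma transporter_eq: "transporter G H K = {g \<in> carrier G. conj_set G g H \<subseteq> K}"
  by (simp add: transporter_def conj_set_def)

context group
begin

lemma mult_inv_cancel_left [simp]: "x \<in> carrier G \<Longrightarrow> y \<in> carrier G \<Longrightarrow> x \<otimes> (inv x \<otimes> y) = y"
  by (simp add: m_assoc[symmetric])

lemma inv_mult_cancel_left [simp]: "x \<in> carrier G \<Longrightarrow> y \<in> carrier G \<Longrightarrow> inv x \<otimes> (x \<otimes> y) = y"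
  by (simp add: m_assoc[symmetric])

lemma conj_set_one:
  assumes "H \<subseteq> carrier G"
  shows "conj_set G \<one> H = H"
proof -
  have "conj_set G \<one> H = (\<lambda>h. h) ` H"
    unfolding conj_set_def using assms by (intro image_cong) (auto simp: subsetD)
  then show ?thesis by simp
qed

lemma conj_set_conj_set:
  assumes "H \<subseteq> carrier G" "a \<in> carrier G" "b \<in> carrier G"
  shows "conj_set G a (conj_set G b H) = conj_set G (b \<otimes> a) H"
  unfolding conj_set_def image_image using assms
  by (intro image_cong) (auto simp: inv_mult_group m_assoc subsetD)

lemma conj_set_inv_conj_set:
  assumes "H \<subseteq> carrier G" "g \<in> carrier G"
  shows "conj_set G (inv g) (conj_set G g H) = H"
  using assms by (simp add: conj_set_conj_set conj_set_one)

lemma conj_set_subset_carrier: "H \<subseteq> carrier G \<Longrightarrow> g \<in> carrier G \<Longrightarrow> conj_set G g H \<subseteq> carrier G"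
  by (auto simp: conj_set_def)

lemma conj_set_subset_iff:
  assumes "H \<subseteq> carrier G" "K \<subseteq> carrier G" "g \<in> carrier G"
  shows "conj_set G g H \<subseteq> K \<longleftrightarrow> H \<subseteq> conj_set G (inv g) K"
proof
  assume "conj_set G g H \<subseteq> K"
  then have "conj_set G (inv g) (conj_set G g H) \<subseteq> conj_set G (inv g) K"
    unfolding conj_set_def by (rule image_mono)
  then show "H \<subseteq> conj_set G (inv g) K"
    using assms by (simp add: conj_set_inv_conj_set)
next
  assume "H \<subseteq> conj_set G (inv g) K"
  then have "conj_set G g H \<subseteq> conj_set G g (conj_set G (inv g) K)"
    unfolding conj_set_def by (rule image_mono)
  then show "conj_set G g H \<subseteq> K"
    using assms by (simp add: conj_set_conj_set conj_set_one)
qed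

lemma card_conj_set:
  assumes "H \<subseteq> carrier G" "g \<in> carrier G"
  shows "card (conj_set G g H) = card H"
  unfolding conj_set_def using assms
  by (intro card_image inj_onI) (auto simp: subsetD)

lemma subgroup_conj_set:
  assumes "subgroup H G" "g \<in> carrier G"
  shows "subgroup (conj_set G g H) G"
proof (rule subgroupI)
  have H_carrier: "H \<subseteq> carrier G" using subgroup.subset[OF assms(1)] .
  then show "conj_set G g H \<subseteq> carrier G"
    using assms(2) by (rule conj_set_subset_carrier)
  show "conj_set G g H \<noteq> {}"
    using subgroup.one_closed[OF assms(1)] unfolding conj_set_def by blast
next
  fix a assume "a \<in> conj_set G g H"
  then obtain h where h: "h \<in> H" "a = inv g \<otimes> h \<otimes> g" by (auto simp: conj_set_def)
  have "h \<in> carrier G" using h(1) subgroup.subset[OF assms(1)] by blast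
  then have "inv a = inv g \<otimes> inv h \<otimes> g"
    using h(2) assms(2) by (simp add: inv_mult_group m_assoc)
  then show "inv a \<in> conj_set G g H"
    using h(1) subgroup.m_inv_closed[OF assms(1)] by (auto simp: conj_set_def)
next
  fix a b assume "a \<in> conj_set G g H" "b \<in> conj_set G g H"
  then obtain h h' where h: "h \<in> H" "a = inv g \<otimes> h \<otimes> g"
    and h': "h' \<in> H" "b = inv g \<otimes> h' \<otimes> g"
    by (auto simp: conj_set_def)
  have "h \<in> carrier G" "h' \<in> carrier G"
    using h(1) h'(1) subgroup.subset[OF assms(1)] by blast+
  then have "a \<otimes> b = inv g \<otimes> (h \<otimes> h') \<otimes> g"
    using h(2) h'(2) assms(2) by (simp add: m_assoc)
  then show "a \<otimes> b \<in> conj_set G g H"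
    using h(1) h'(1) subgroup.m_closed[OF assms(1)] by (auto simp: conj_set_def)
qed

lemma conj_set_mem_nonid_p_subgroups:
  assumes "H \<in> nonid_p_subgroups G p" "g \<in> carrier G"
  shows "conj_set G g H \<in> nonid_p_subgroups G p"
proof -
  have H: "subgroup H G" "\<exists>n. card H = p ^ n" "H \<noteq> {\<one>}"
    using assms(1) by (auto simp: nonid_p_subgroups_def)
  have card_eq: "card (conj_set G g H) = card H"
    using card_conj_set[OF subgroup.subset[OF H(1)] assms(2)] .
  have "conj_set G g H \<noteq> {\<one>}"
  proof
    assume "conj_set G g H = {\<one>}"
    then have "card H = 1" using card_eq by simp
    with subgroup.one_closed[OF H(1)] have "H = {\<one>}" by (auto simp: card_1_singleton_iff)
    with H(3) show False ..
  qed
  then show ?thesis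
    using subgroup_conj_set[OF H(1) assms(2)] card_eq H(2) by (simp add: nonid_p_subgroups_def)
qed

lemma centralizer_subset_carrier: "centralizer_set G H \<subseteq> carrier G"
  by (auto simp: centralizer_set_def)

lemma subgroup_centralizer:
  assumes "H \<subseteq> carrier G"
  shows "subgroup (centralizer_set G H) G"
proof (rule subgroupI)
  show "centralizer_set G H \<subseteq> carrier G" by (rule centralizer_subset_carrier)
  show "centralizer_set G H \<noteq> {}"
    using assms by (auto simp: centralizer_set_def subsetD intro!: exI[of _ \<one>])
next
  fix a assume a: "a \<in> centralizer_set G H"
  have "inv a \<otimes> h = h \<otimes> inv a" if "h \<in> H" for h
  proof -
    have a_carrier: "a \<in> carrier G" and h_carrier: "h \<in> carrier G" and comm: "a \<otimes> h = h \<otimes> a"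
      using a that assms by (auto simp: centralizer_set_def)
    have "inv a \<otimes> h = inv a \<otimes> (h \<otimes> a) \<otimes> inv a"
      using a_carrier h_carrier by (simp add: m_assoc)
    also have "\<dots> = inv a \<otimes> (a \<otimes> h) \<otimes> inv a"
      by (simp add: comm)
    also have "\<dots> = h \<otimes> inv a"
      using a_carrier h_carrier by (simp add: m_assoc)
    finally show ?thesis .
  qed
  then show "inv a \<in> centralizer_set G H"
    using a by (auto simp: centralizer_set_def)
next
  fix a b assume a: "a \<in> centralizer_set G H" and b: "b \<in> centralizer_set G H"
  have "a \<otimes> b \<otimes> h = h \<otimes> (a \<otimes> b)" if "h \<in> H" for h
  proof -
    have carrier: "a \<in> carrier G" "b \<in> carrier G" "h \<in> carrier G"
      and comm: "a \<otimes> h = h \<otimes> a" "b \<otimes> h = h \<otimes> b"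
      using a b that assms by (auto simp: centralizer_set_def)
    have "a \<otimes> b \<otimes> h = a \<otimes> (h \<otimes> b)"
      using carrier by (simp add: m_assoc comm)
    also have "\<dots> = h \<otimes> a \<otimes> b"
      using carrier by (simp add: m_assoc[symmetric] comm)
    finally show ?thesis
      using carrier by (simp add: m_assoc)
  qed
  then show "a \<otimes> b \<in> centralizer_set G H"
    using a b by (auto simp: centralizer_set_def)
qed

lemma conj_set_centralizer_subset:
  assumes "H \<subseteq> carrier G" "g \<in> carrier G"
  shows "conj_set G g (centralizer_set G H) \<subseteq> centralizer_set G (conj_set G g H)"
proof
  fix y assume "y \<in> conj_set G g (centralizer_set G H)"
  then obtain c where c: "c \<in> carrier G" "\<And>h. h \<in> H \<Longrightarrow> c \<otimes> h = h \<otimes> c" and y: "y = inv g \<otimes> c \<otimes> g"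
    by (auto simp: conj_set_def centralizer_set_def)
  have "y \<otimes> x = x \<otimes> y" if x: "x \<in> conj_set G g H" for x
  proof -
    obtain h where h: "h \<in> H" "x = inv g \<otimes> h \<otimes> g"
      using x by (auto simp: conj_set_def)
    have "h \<in> carrier G" using h(1) assms(1) by blast
    then have "y \<otimes> x = inv g \<otimes> (c \<otimes> h) \<otimes> g" "x \<otimes> y = inv g \<otimes> (h \<otimes> c) \<otimes> g"
      using c(1) y h(2) assms(2) by (simp_all add: m_assoc)
    then show ?thesis using c(2)[OF h(1)] by simp
  qed
  then show "y \<in> centralizer_set G (conj_set G g H)"
    using c(1) y assms(2) by (auto simp: centralizer_set_def)
qed

lemma centralizer_conj_set:
  assumes "H \<subseteq> carrier G" "g \<in> carrier G"
  shows "centralizer_set G (conj_set G g H) = conj_set G g (centralizer_set G H)"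
proof
  have gH: "conj_set G g H \<subseteq> carrier G"
    using assms by (rule conj_set_subset_carrier)
  have "conj_set G (inv g) (centralizer_set G (conj_set G g H))
      \<subseteq> centralizer_set G (conj_set G (inv g) (conj_set G g H))"
    using gH assms(2) by (intro conj_set_centralizer_subset) auto
  then have "conj_set G (inv g) (centralizer_set G (conj_set G g H)) \<subseteq> centralizer_set G H"
    using assms by (simp add: conj_set_inv_conj_set)
  then have "conj_set G g (conj_set G (inv g) (centralizer_set G (conj_set G g H)))
      \<subseteq> conj_set G g (centralizer_set G H)"
    unfolding conj_set_def by (rule image_mono)
  then show "centralizer_set G (conj_set G g H) \<subseteq> conj_set G g (centralizer_set G H)"
    using centralizer_subset_carrier assms(2) by (simp add: conj_set_conj_set conj_set_one)
  show "conj_set G g (centralizer_set G H) \<subseteq> centralizer_set G (conj_set G g H)"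
    using assms by (rule conj_set_centralizer_subset)
qed

lemma card_centralizer_conj_set:
  assumes "H \<subseteq> carrier G" "g \<in> carrier G"
  shows "card (centralizer_set G (conj_set G g H)) = card (centralizer_set G H)"
  using assms centralizer_subset_carrier by (simp add: centralizer_conj_set card_conj_set)

lemma conj_set_centralizing:
  assumes "H \<subseteq> carrier G" "c \<in> centralizer_set G H"
  shows "conj_set G c H = H"
proof -
  have "inv c \<otimes> h \<otimes> c = h" if "h \<in> H" for h
  proof -
    have carrier: "c \<in> carrier G" "h \<in> carrier G" and comm: "c \<otimes> h = h \<otimes> c"
      using assms that by (auto simp: centralizer_set_def)
    have "inv c \<otimes> h \<otimes> c = inv c \<otimes> (c \<otimes> h)"
      using carrier by (simp add: m_assoc comm)
    then show ?thesis using carrier by simp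
  qed
  then show ?thesis by (simp add: conj_set_def)
qed

lemma card_rcosets_of_stable_mult_card:
  assumes "subgroup C G" "finite T" "T \<subseteq> carrier G"
    and stable: "\<And>c t. c \<in> C \<Longrightarrow> t \<in> T \<Longrightarrow> c \<otimes> t \<in> T"
  shows "card ((\<lambda>g. C #> g) ` T) * card C = card T"
proof -
  let ?Q = "(\<lambda>g. C #> g) ` T"
  have C_carrier: "C \<subseteq> carrier G" using subgroup.subset[OF assms(1)] .
  have Q_rcosets: "?Q \<subseteq> rcosets C"
    using assms(3) C_carrier by (auto intro: rcosetsI)
  have "\<Union>?Q = T"
  proof
    show "\<Union>?Q \<subseteq> T" using stable by (auto simp: r_coset_def)
    show "T \<subseteq> \<Union>?Q" using rcos_self[OF _ assms(1)] assms(3) by blast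
  qed
  moreover have "card C * card ?Q = card (\<Union>?Q)"
  proof (rule card_partition)
    show "finite ?Q" "finite (\<Union>?Q)" using \<open>\<Union>?Q = T\<close> assms(2) by simp_all
    show "card q = card C" if "q \<in> ?Q" for q
      using Q_rcosets that card_rcosets_equal[OF _ C_carrier] by auto
    show "q \<inter> q' = {}" if "q \<in> ?Q" "q' \<in> ?Q" "q \<noteq> q'" for q q'
      using Q_rcosets that rcos_disjoint[OF assms(1)] unfolding pairwise_def disjnt_def by blast
  qed
  ultimately show ?thesis by (simp add: mult.commute)
qed

lemma fusion_hom_card_mult_card_centralizer:
  assumes "finite (carrier G)" "H \<subseteq> carrier G"
  shows "fusion_hom_card G H K * card (centralizer_set G H) = card (transporter G H K)"
  unfolding fusion_hom_card_def
proof (rule card_rcosets_of_stable_mult_card)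
  show "subgroup (centralizer_set G H) G" using assms(2) by (rule subgroup_centralizer)
  show "transporter G H K \<subseteq> carrier G" by (auto simp: transporter_def)
  then show "finite (transporter G H K)" using assms(1) by (rule finite_subset)
next
  fix c g assume c: "c \<in> centralizer_set G H" and g: "g \<in> transporter G H K"
  have "c \<in> carrier G" "g \<in> carrier G" using c g by (auto simp: centralizer_set_def transporter_def)
  then have "conj_set G (c \<otimes> g) H = conj_set G g (conj_set G c H)"
    using assms(2) by (simp add: conj_set_conj_set)
  also have "\<dots> = conj_set G g H"
    using assms(2) c by (simp add: conj_set_centralizing)
  finally show "c \<otimes> g \<in> transporter G H K"
    using g \<open>c \<in> carrier G\<close> by (simp add: transporter_eq)
qed

lemma card_centralizer_pos:
  assumes "finite (carrier G)" "H \<subseteq> carrier G"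
  shows "0 < card (centralizer_set G H)"
proof -
  have "\<one> \<in> centralizer_set G H" using assms(2) by (auto simp: centralizer_set_def)
  moreover have "finite (centralizer_set G H)"
    using centralizer_subset_carrier assms(1) by (rule finite_subset)
  ultimately show ?thesis by (auto simp: card_gt_0_iff)
qed

lemma of_nat_fusion_hom_card:
  assumes "finite (carrier G)" "H \<subseteq> carrier G"
  shows "(of_nat (fusion_hom_card G H K) :: 'c::field_char_0)
    = (\<Sum>g\<in>carrier G. of_bool (conj_set G g H \<subseteq> K)) / of_nat (card (centralizer_set G H))"
proof -
  have "(of_nat (fusion_hom_card G H K) :: 'c) * of_nat (card (centralizer_set G H))
      = of_nat (card (transporter G H K))"
    by (simp flip: of_nat_mult add: fusion_hom_card_mult_card_centralizer[OF assms])
  also have "\<dots> = (\<Sum>g\<in>carrier G. of_bool (conj_set G g H \<subseteq> K))"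
    using assms(1) by (simp add: transporter_eq Int_def)
  finally show ?thesis
    using card_centralizer_pos[OF assms] by (simp add: eq_divide_eq)
qed

lemma of_nat_card_centralizer:
  assumes "finite (carrier G)" "H \<subseteq> carrier G"
  shows "(of_nat (card (centralizer_set G H)) :: 'c::semiring_1)
    = (\<Sum>x\<in>carrier G. of_bool (H \<subseteq> centralizer_set G {x}))"
proof -
  have "centralizer_set G H = carrier G \<inter> {x. H \<subseteq> centralizer_set G {x}}"
    using assms(2) by (auto simp: centralizer_set_def)
  then show ?thesis using assms(1) by simp
qed

lemma nonid_p_subgroups_subgroup:
  assumes "subgroup J G"
  shows "nonid_p_subgroups (G\<lparr>carrier := J\<rparr>) p = {H \<in> nonid_p_subgroups G p. H \<subseteq> J}"
proof -
  have "subgroup H (G\<lparr>carrier := J\<rparr>) \<longleftrightarrow> subgroup H G \<and> H \<subseteq> J" for H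
    using incl_subgroup[OF assms] subgroup_incl[OF _ assms] subgroup.subset by fastforce
  then show ?thesis by (auto simp: nonid_p_subgroups_def)
qed

lemma finite_nonid_p_subgroups:
  assumes "finite (carrier G)"
  shows "finite (nonid_p_subgroups G p)"
proof (rule finite_subset)
  show "nonid_p_subgroups G p \<subseteq> Pow (carrier G)"
    by (auto simp: nonid_p_subgroups_def dest: subgroup.subset)
  show "finite (Pow (carrier G))" using assms by simp
qed

lemma is_weighting_fusion:
  assumes fin: "finite (carrier G)"
    and S_carrier: "\<And>H. H \<in> S \<Longrightarrow> H \<subseteq> carrier G"
    and S_conj: "\<And>H g. H \<in> S \<Longrightarrow> g \<in> carrier G \<Longrightarrow> conj_set G g H \<in> S"
    and w: "\<And>H. H \<in> S \<Longrightarrow>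
      (\<Sum>K\<in>S. of_bool (H \<subseteq> K) * w K) = of_nat (card (centralizer_set G H)) / of_nat (order G)"
  shows "is_weighting S (fusion_hom_card G) w"
  unfolding is_weighting_def
proof
  fix H assume H: "H \<in> S"
  let ?c = "\<lambda>H. of_nat (card (centralizer_set G H)) :: rat"
  have "(\<Sum>K\<in>S. of_nat (fusion_hom_card G H K) * w K)
      = (\<Sum>K\<in>S. \<Sum>g\<in>carrier G. of_bool (conj_set G g H \<subseteq> K) * w K) / ?c H"
    by (simp add: of_nat_fusion_hom_card[OF fin S_carrier[OF H]] sum_divide_distrib
        sum_distrib_right del: sum_of_bool_mult_eq)
  also have "\<dots> = (\<Sum>g\<in>carrier G. \<Sum>K\<in>S. of_bool (conj_set G g H \<subseteq> K) * w K) / ?c H"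
    by (subst sum.swap) (rule refl)
  also have "\<dots> = (\<Sum>g\<in>carrier G. ?c H / of_nat (order G)) / ?c H"
  proof -
    have "(\<Sum>K\<in>S. of_bool (conj_set G g H \<subseteq> K) * w K) = ?c H / of_nat (order G)"
      if "g \<in> carrier G" for g
      using w[OF S_conj[OF H that]] card_centralizer_conj_set[OF S_carrier[OF H] that] by simp
    then show ?thesis by (simp cong: sum.cong del: sum_of_bool_mult_eq)
  qed
  also have "\<dots> = 1"
    using card_centralizer_pos[OF fin S_carrier[OF H]] order_gt_0_iff_finite fin
    by (simp add: order_def card_gt_0_iff)
  finally show "(\<Sum>K\<in>S. of_nat (fusion_hom_card G H K) * w K) = 1" .
qed

lemma is_coweighting_fusion:
  assumes fin: "finite (carrier G)"
    and S_carrier: "\<And>H. H \<in> S \<Longrightarrow> H \<subseteq> carrier G"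
    and S_conj: "\<And>H g. H \<in> S \<Longrightarrow> g \<in> carrier G \<Longrightarrow> conj_set G g H \<in> S"
    and v: "is_coweighting S (\<lambda>H K. of_bool (H \<subseteq> K)) v"
  shows "is_coweighting S (fusion_hom_card G)
    (\<lambda>H. of_nat (card (centralizer_set G H)) * v H / of_nat (order G))"
  unfolding is_coweighting_def
proof
  fix K assume K: "K \<in> S"
  let ?c = "\<lambda>H. of_nat (card (centralizer_set G H)) :: rat"
  have "(\<Sum>H\<in>S. ?c H * v H / of_nat (order G) * of_nat (fusion_hom_card G H K))
      = (\<Sum>H\<in>S. \<Sum>g\<in>carrier G. v H * of_bool (conj_set G g H \<subseteq> K)) / of_nat (order G)"
  proof -
    have "?c H * v H / of_nat (order G) * of_nat (fusion_hom_card G H K)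
        = (\<Sum>g\<in>carrier G. v H * of_bool (conj_set G g H \<subseteq> K)) / of_nat (order G)"
      if "H \<in> S" for H
    proof -
      have "?c H \<noteq> 0" using card_centralizer_pos[OF fin S_carrier[OF that]] by simp
      then have "?c H * v H / of_nat (order G) * of_nat (fusion_hom_card G H K)
          = v H * (\<Sum>g\<in>carrier G. of_bool (conj_set G g H \<subseteq> K)) / of_nat (order G)"
        by (simp add: of_nat_fusion_hom_card[OF fin S_carrier[OF that]] del: sum_of_bool_eq)
      then show ?thesis by (simp add: sum_distrib_left del: sum_of_bool_eq sum_mult_of_bool_eq)
    qed
    then show ?thesis
      by (simp add: sum_divide_distrib cong: sum.cong del: sum_mult_of_bool_eq)
  qed
  also have "\<dots> = (\<Sum>g\<in>carrier G. \<Sum>H\<in>S. v H * of_bool (H \<subseteq> conj_set G (inv g) K)) / of_nat (order G)"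
    using S_carrier K by (subst sum.swap) (simp add: conj_set_subset_iff cong: sum.cong del: sum_mult_of_bool_eq)
  also have "\<dots> = (\<Sum>g\<in>carrier G. 1) / of_nat (order G)"
    using v S_conj[OF K] by (simp add: is_coweighting_def cong: sum.cong del: sum_mult_of_bool_eq)
  also have "\<dots> = 1"
    using order_gt_0_iff_finite fin by (simp add: order_def card_gt_0_iff)
  finally show "(\<Sum>H\<in>S. ?c H * v H / of_nat (order G) * of_nat (fusion_hom_card G H K)) = 1" .
qed

lemma sum_card_centralizer_mult_eq:
  assumes "finite (carrier G)" "\<And>H. H \<in> S \<Longrightarrow> H \<subseteq> carrier G"
  shows "(\<Sum>H\<in>S. of_nat (card (centralizer_set G H)) * f H)
    = (\<Sum>x\<in>carrier G. \<Sum>H\<in>S. of_bool (H \<subseteq> centralizer_set G {x}) * (f H :: 'c::comm_semiring_1))"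
proof -
  have "(\<Sum>H\<in>S. of_nat (card (centralizer_set G H)) * f H)
      = (\<Sum>H\<in>S. \<Sum>x\<in>carrier G. of_bool (H \<subseteq> centralizer_set G {x}) * f H)"
    using assms by (simp add: of_nat_card_centralizer sum_distrib_right cong: sum.cong
        del: sum_of_bool_mult_eq sum_of_bool_eq)
  also have "\<dots> = (\<Sum>x\<in>carrier G. \<Sum>H\<in>S. of_bool (H \<subseteq> centralizer_set G {x}) * f H)"
    by (rule sum.swap)
  finally show ?thesis .
qed

lemma poset_chi_subgroup:
  assumes "finite (carrier G)" "subgroup J G"
    and v: "is_coweighting (nonid_p_subgroups G p) (\<lambda>H K. of_bool (H \<subseteq> K)) v"
  shows "poset_chi (G\<lparr>carrier := J\<rparr>) p = (\<Sum>H\<in>nonid_p_subgroups G p. of_bool (H \<subseteq> J) * v H)"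
proof -
  let ?S = "nonid_p_subgroups G p"
  have "poset_chi (G\<lparr>carrier := J\<rparr>) p = euler_char {H \<in> ?S. H \<subseteq> J} (\<lambda>H K. of_bool (H \<subseteq> K))"
    unfolding poset_chi_def nonid_p_subgroups_subgroup[OF assms(2)] ..
  also have "\<dots> = sum v {H \<in> ?S. H \<subseteq> J}"
    using finite_nonid_p_subgroups[OF assms(1)] v
    by (rule poset_euler_char_down_closed) auto
  also have "\<dots> = (\<Sum>H\<in>?S. of_bool (H \<subseteq> J) * v H)"
    using finite_nonid_p_subgroups[OF assms(1)] by (simp add: Int_def)
  finally show ?thesis .
qed

end

theorem proposition5p3:
  fixes G (structure) and p :: nat
  assumes "group G" and "finite (carrier G)" and "Factorial_Ring.prime p"
  shows "fusion_chi_defined G p \<and>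
         fusion_chi G p = (1 / of_nat (order G)) *
           (\<Sum>x\<in>carrier G. poset_chi (G\<lparr>carrier := centralizer_set G {x}\<rparr>) p)"
proof -
  interpret group G by fact
  define S where "S = nonid_p_subgroups G p"
  have fin_S: "finite S" unfolding S_def using assms(2) by (rule finite_nonid_p_subgroups)
  have S_carrier: "H \<subseteq> carrier G" if "H \<in> S" for H
    using that by (auto simp: S_def nonid_p_subgroups_def dest: subgroup.subset)
  have S_conj: "conj_set G g H \<in> S" if "H \<in> S" "g \<in> carrier G" for H g
    using that unfolding S_def by (rule conj_set_mem_nonid_p_subgroups)
  obtain w where "\<forall>H\<in>S. (\<Sum>K\<in>S. of_bool (H \<subseteq> K) * w K)
      = of_nat (card (centralizer_set G H)) / (of_nat (order G) :: rat)"
    using poset_zeta_solvable[OF fin_S, of "\<lambda>H. of_nat (card (centralizer_set G H)) / of_nat (order G)"]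
    by blast
  then have W: "is_weighting S (fusion_hom_card G) w"
    using assms(2) S_carrier S_conj by (intro is_weighting_fusion) auto
  obtain v where v: "is_coweighting S (\<lambda>H K. of_bool (H \<subseteq> K)) v"
    using poset_has_coweighting[OF fin_S] by blast
  note CW = is_coweighting_fusion[OF assms(2) S_carrier S_conj v]
  have "fusion_chi G p = (\<Sum>H\<in>S. of_nat (card (centralizer_set G H)) * v H) / of_nat (order G)"
    unfolding fusion_chi_def S_def[symmetric] sum_divide_distrib
    using fin_S W CW by (intro euler_char_eq_coweighting_sum) auto
  also have "\<dots> = (\<Sum>x\<in>carrier G. \<Sum>H\<in>S. of_bool (H \<subseteq> centralizer_set G {x}) * v H)
      / of_nat (order G)"
    by (simp only: sum_card_centralizer_mult_eq[OF assms(2) S_carrier])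
  also have "\<dots> = (\<Sum>x\<in>carrier G. poset_chi (G\<lparr>carrier := centralizer_set G {x}\<rparr>) p)
      / of_nat (order G)"
    using poset_chi_subgroup[OF assms(2) subgroup_centralizer v[unfolded S_def]]
    by (simp add: S_def del: sum_of_bool_mult_eq)
  finally show ?thesis
    using W CW by (auto simp: fusion_chi_defined_def has_euler_char_def S_def)
qed

end
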